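(* Let $n\mid(q-1)$, let $b\ge1$, $m\ge1$ be integers with $\gcd(b,n)=1$, let $t\in\{0,\dots,n-1\}$, and let $\ell$ be any integer with $m+1\le\ell\le n-2$. Put $A=\{\alpha^{t},\alpha^{t+b},\dots,\alpha^{t+(m-1)b},\alpha^{t+\ell b}\}$ and let $d_A^{\perp}$ be the minimum distance of the dual of $C_A$. Then $C_A$ is an optimal cyclic $(d_A^{\perp}-1)$-LRC, i.e. an optimal $(d_A^{\perp}-1,2)$-LRC.
   Context: Let $q$ be a prime power and $n\mid(q-1)$, so the set $R_n$ of all $n$-th roots of unity lies in $\mathbb{F}_q$; let $\alpha\in\mathbb{F}_q$ be a primitive $n$-th root of unity. For $Z\subseteq R_n$, $C_Z$ denotes the cyclic code of length $n$ over $\mathbb{F}_q$ with complete defining set $Z$, i.e. the ideal generated by $\prod_{\beta\in Z}(x-\beta)$ in $\mathbb{F}_q[x]/(x^n-1)$, identified with a subspace of $\mathbb{F}_q^n$; it has dimension $n-|Z|$. Locality: for a linear code $C\subseteq\mathbb{F}_q^n$ and integers $r\ge1$, $\delta\ge2$, the $i$-th coordinate has $(r,\delta)$-locality if there is $S_i\subseteq\{1,\dots,n\}$ with $i\in S_i$, $|S_i|\le r+\delta-1$ such that the punctured code $C|_{S_i}$ has minimum distance at least $\delta$; $C$ is an $(r,\delta)$-LRC if every coordinate has $(r,\delta)$-locality; an $r$-LRC is an $(r,2)$-LRC. An $[n,k,d]$ $(r,\delta)$-LRC is optimal if $d=n-k-(\lceil k/r\rceil-1)(\delta-1)+1$ (this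 quantity is always an upper bound on $d$); for $\delta=2$ this reads $d=n-k-\lceil k/r\rceil+2$. *)

theory Defs
  imports "HOL-Computational_Algebra.Polynomial" "HOL-Library.Cardinality"
begin

text \<open>Words of length n over a field are modelled as functions nat => 'a that vanish
  outside the coordinate set {0..<n}; a code is a set of such words.\<close>

definition words :: "nat \<Rightarrow> (nat \<Rightarrow> 'a::zero) set" where
  "words n = {c. \<forall>i\<ge>n. c i = 0}"

definition word_poly :: "nat \<Rightarrow> (nat \<Rightarrow> 'a::comm_ring_1) \<Rightarrow> 'a poly" where
  "word_poly n c = (\<Sum>i<n. monom (c i) i)"

definition gen_poly :: "'a::field set \<Rightarrow> 'a poly" where
  "gen_poly Z = (\<Prod>\<beta>\<in>Z. [:-\<beta>, 1:])"

text \<open>Cyclic code with complete defining set Z: the ideal generated by gen_poly Z in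
  F[x]/(x^n - 1); since gen_poly Z divides x^n - 1, its elements (as polynomials of
  degree < n) are exactly the multiples of gen_poly Z.\<close>
definition cyclic_code :: "nat \<Rightarrow> 'a::field set \<Rightarrow> (nat \<Rightarrow> 'a) set" where
  "cyclic_code n Z = {c \<in> words n. gen_poly Z dvd word_poly n c}"

definition dual_code :: "nat \<Rightarrow> (nat \<Rightarrow> 'a::field) set \<Rightarrow> (nat \<Rightarrow> 'a) set" where
  "dual_code n C = {y \<in> words n. \<forall>c\<in>C. (\<Sum>i<n. c i * y i) = 0}"

definition weight :: "nat \<Rightarrow> (nat \<Rightarrow> 'a::zero) \<Rightarrow> nat" where
  "weight n c = card {i. i < n \<and> c i \<noteq> 0}"

definition min_dist :: "nat \<Rightarrow> (nat \<Rightarrow> 'a::zero) set \<Rightarrow> nat" where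
  "min_dist n C = Inf {weight n c | c. c \<in> C \<and> c \<noteq> (\<lambda>_. 0)}"

definition code_dim :: "(nat \<Rightarrow> 'a::{field,finite}) set \<Rightarrow> nat" where
  "code_dim C = (THE k. card C = CARD('a) ^ k)"

definition is_cyclic :: "nat \<Rightarrow> (nat \<Rightarrow> 'a::zero) set \<Rightarrow> bool" where
  "is_cyclic n C \<longleftrightarrow> (\<forall>c\<in>C. (\<lambda>i. if i < n then c ((i + n - 1) mod n) else 0) \<in> C)"

text \<open>Punctured code C|_S (coordinates outside S set to 0, i.e. deleted).\<close>
definition puncture :: "nat set \<Rightarrow> (nat \<Rightarrow> 'a::zero) set \<Rightarrow> (nat \<Rightarrow> 'a) set" where
  "puncture S C = (\<lambda>c i. if i \<in> S then c i else 0) ` C"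

text \<open>"C|_S has minimum distance at least delta": every nonzero word of C|_S has weight
  at least delta (the zero code counts as having infinite distance).\<close>
definition has_locality :: "nat \<Rightarrow> (nat \<Rightarrow> 'a::zero) set \<Rightarrow> nat \<Rightarrow> nat \<Rightarrow> nat \<Rightarrow> bool" where
  "has_locality n C r \<delta> i \<longleftrightarrow>
     (\<exists>S. S \<subseteq> {..<n} \<and> i \<in> S \<and> card S \<le> r + \<delta> - 1 \<and>
        (\<forall>c\<in>puncture S C. c \<noteq> (\<lambda>_. 0) \<longrightarrow> weight n c \<ge> \<delta>))"

definition is_LRC :: "nat \<Rightarrow> (nat \<Rightarrow> 'a::zero) set \<Rightarrow> nat \<Rightarrow> nat \<Rightarrow> bool" where
  "is_LRC n C r \<delta> \<longleftrightarrow> r \<ge> 1 \<and> \<delta> \<ge> 2 \<and> (\<forall>i<n. has_locality n C r \<delta> i)"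

definition optimal_LRC :: "nat \<Rightarrow> (nat \<Rightarrow> 'a::{field,finite}) set \<Rightarrow> nat \<Rightarrow> nat \<Rightarrow> bool" where
  "optimal_LRC n C r \<delta> \<longleftrightarrow> is_LRC n C r \<delta> \<and>
     int (min_dist n C) = int n - int (code_dim C)
        - (\<lceil>real (code_dim C) / real r\<rceil> - 1) * (int \<delta> - 1) + 1"

end

theory Submission
  imports Defs "HOL-Library.FuncSet"
begin

text \<open>Write \<open>\<gamma> = \<alpha>\<^sup>b\<close>, again a primitive \<open>n\<close>-th root since \<open>gcd(b,n) = 1\<close>, and \<open>J = {0..m-1} \<union> {l}\<close>:
  a word \<open>c\<close> lies in \<open>C\<^sub>A\<close> iff its syndromes \<open>\<Sum>\<^sub>i c\<^sub>i (\<alpha>\<^sup>t \<gamma>\<^sup>j)\<^sup>i\<close> vanish for \<open>j \<in> J\<close>, and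
  \<open>C\<^sub>A\<close> has dimension \<open>k = n - m - 1\<close>. The \<open>m\<close> consecutive zeros give the BCH bound
  \<open>d \<ge> m + 1 = n - k\<close> (a Vandermonde argument), and the Singleton bound gives \<open>d \<le> m + 2\<close>.
  Shifting a minimum-weight dual word onto each coordinate makes \<open>C\<^sub>A\<close> a \<open>(d\<^sup>\<bottom> - 1)\<close>-LRC.
  If \<open>d\<^sup>\<bottom> > k\<close>, a codeword of weight \<open>m + 1\<close> would yield, by interpolating \<open>x\<^sup>l\<close> on its
  support with a polynomial supported on \<open>J\<close>, a dual word of weight at most \<open>k\<close>; hence
  \<open>d = n - k + 1\<close> and \<open>\<lceil>k/(d\<^sup>\<bottom> - 1)\<rceil> = 1\<close>. If \<open>d\<^sup>\<bottom> \<le> k\<close>, one dual word of weight at most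
  \<open>k\<close> forces \<open>d = n - k\<close> by counting, and two shifted copies of it would force a codeword
  below the BCH bound unless \<open>k \<le> 2(d\<^sup>\<bottom> - 1)\<close>; so \<open>\<lceil>k/(d\<^sup>\<bottom> - 1)\<rceil> = 2\<close>. Either way the
  Singleton-like bound for LRCs is attained.\<close>

section \<open>Polynomials\<close>

lemma gen_poly_nonzero: "finite Z \<Longrightarrow> gen_poly Z \<noteq> 0"
  unfolding gen_poly_def by (simp add: prod_zero_iff)

lemma degree_gen_poly: "finite Z \<Longrightarrow> degree (gen_poly Z) = card Z"
  unfolding gen_poly_def by (subst degree_prod_sum_eq) auto

lemma poly_gen_poly_eq_0: "finite Z \<Longrightarrow> \<beta> \<in> Z \<Longrightarrow> poly (gen_poly Z) \<beta> = 0"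
  unfolding gen_poly_def poly_prod by (intro prod_zero) auto

lemma gen_poly_dvd_iff: "finite Z \<Longrightarrow> gen_poly Z dvd p \<longleftrightarrow> (\<forall>\<beta>\<in>Z. poly p \<beta> = 0)"
proof (induction Z arbitrary: p rule: finite_induct)
  case empty
  show ?case by (simp add: gen_poly_def)
next
  case (insert a F)
  have gen: "gen_poly (insert a F) = [:-a, 1:] * gen_poly F"
    using insert by (simp add: gen_poly_def)
  show ?case
  proof
    assume "gen_poly (insert a F) dvd p"
    then show "\<forall>\<beta>\<in>insert a F. poly p \<beta> = 0"
      using poly_gen_poly_eq_0[of "insert a F"] insert(1) by (auto elim!: dvdE)
  next
    assume roots: "\<forall>\<beta>\<in>insert a F. poly p \<beta> = 0"
    then have "[:-a, 1:] dvd p" using poly_eq_0_iff_dvd by blast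
    then obtain p' where p': "p = [:-a, 1:] * p'" by (elim dvdE)
    have "poly p' \<beta> = 0" if "\<beta> \<in> F" for \<beta>
    proof -
      have "(\<beta> - a) * poly p' \<beta> = 0" using roots that p' by (simp add: algebra_simps)
      then show ?thesis using that insert(2) by auto
    qed
    then have "gen_poly F dvd p'" using insert(3) by blast
    then show "gen_poly (insert a F) dvd p" unfolding gen p' by (rule mult_dvd_mono[OF dvd_refl])
  qed
qed

lemma coeff_word_poly: "coeff (word_poly n c) i = (if i < n then c i else 0)"
  unfolding word_poly_def by (simp add: coeff_sum coeff_monom)

lemma poly_word_poly: "poly (word_poly n c) x = (\<Sum>i<n. c i * x ^ i)"
  unfolding word_poly_def by (simp add: poly_sum poly_monom)

lemma word_poly_eqI: "c \<in> words n \<Longrightarrow> (\<And>i. coeff p i = c i) \<Longrightarrow> word_poly n c = p"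
  by (rule poly_eqI) (auto simp: coeff_word_poly words_def)

lemma degree_word_poly_le: "degree (word_poly n c) \<le> n - 1"
  by (rule degree_le) (auto simp: coeff_word_poly)

lemma pow_eq_pow_mod: "x ^ n = 1 \<Longrightarrow> x ^ i = x ^ (i mod n)" for x :: "'a::monoid_mult"
proof -
  assume "x ^ n = 1"
  have "x ^ i = x ^ (n * (i div n) + i mod n)" by simp
  also have "\<dots> = (x ^ n) ^ (i div n) * x ^ (i mod n)" by (simp only: power_add power_mult)
  finally show ?thesis using \<open>x ^ n = 1\<close> by simp
qed

lemma exists_poly_vanishing_with_gap:
  fixes X :: "'a::field set"
  assumes "finite X" "card X \<le> l"
  obtains H where "coeff H l = 1" "\<And>j. coeff H j \<noteq> 0 \<Longrightarrow> j < card X \<or> j = l"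
    "\<And>x. x \<in> X \<Longrightarrow> poly H x = 0"
proof -
  define R where "R = monom 1 l mod gen_poly X"
  have R_small: "coeff R j = 0" if "j \<ge> card X" for j
  proof (cases "R = 0")
    case False
    then have "degree R < card X"
      using degree_mod_less'[OF gen_poly_nonzero[OF assms(1)]] degree_gen_poly[OF assms(1)]
      unfolding R_def by simp
    then show ?thesis using that by (intro coeff_eq_0) simp
  qed simp
  define H where "H = monom 1 l - R"
  have "coeff H l = 1" unfolding H_def using R_small assms(2) by simp
  moreover have "j < card X \<or> j = l" if "coeff H j \<noteq> 0" for j
  proof (rule ccontr)
    assume "\<not> (j < card X \<or> j = l)"
    then have "coeff H j = 0" unfolding H_def using R_small[of j] by (simp add: coeff_monom)
    then show False using that by simp
  qed
  moreover have "poly H x = 0" if "x \<in> X" for x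
  proof -
    have "monom 1 l div gen_poly X * gen_poly X + R = monom 1 l"
      unfolding R_def by (rule div_mult_mod_eq)
    then have "H = monom 1 l div gen_poly X * gen_poly X" unfolding H_def by (simp add: diff_eq_eq)
    then show ?thesis using poly_gen_poly_eq_0[OF assms(1) that] by simp
  qed
  ultimately show ?thesis using that by blast
qed

lemma exists_poly_vanishing_except:
  fixes x :: "nat \<Rightarrow> 'a::field"
  assumes "finite P" "i0 \<in> P" "inj_on x P"
  obtains H where "degree H = card P - 1" "\<And>i. i \<in> P \<Longrightarrow> i \<noteq> i0 \<Longrightarrow> poly H (x i) = 0"
    "poly H (x i0) \<noteq> 0"
proof
  let ?H = "\<Prod>i\<in>P - {i0}. [:- x i, 1:]"
  show "degree ?H = card P - 1"
    using assms(1,2) by (subst degree_prod_sum_eq) (auto simp: card_Diff_singleton)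
  show "poly ?H (x i) = 0" if "i \<in> P" "i \<noteq> i0" for i
    unfolding poly_prod using assms(1) that by (intro prod_zero) auto
  have "x i0 \<noteq> x i" if "i \<in> P - {i0}" for i
    using that assms(2,3) unfolding inj_on_def by blast
  then show "poly ?H (x i0) \<noteq> 0" unfolding poly_prod using assms(1) by (simp add: prod_zero_iff)
qed

section \<open>Words, weights and minimum distance\<close>

definition supported_on :: "nat set \<Rightarrow> (nat \<Rightarrow> 'a::zero) set" where
  "supported_on T = {v. \<forall>i. i \<notin> T \<longrightarrow> v i = 0}"

definition restrict_word :: "nat set \<Rightarrow> (nat \<Rightarrow> 'a::zero) \<Rightarrow> nat \<Rightarrow> 'a" where
  "restrict_word T c = (\<lambda>i. if i \<in> T then c i else 0)"

definition word_support :: "nat \<Rightarrow> (nat \<Rightarrow> 'a::zero) \<Rightarrow> nat set" where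
  "word_support n c = {i. i < n \<and> c i \<noteq> 0}"

lemma words_eq_supported_on: "words n = supported_on {..<n}"
  unfolding words_def supported_on_def by auto

lemma restrict_word_in_supported_on: "restrict_word T c \<in> supported_on T"
  unfolding restrict_word_def supported_on_def by simp

lemma puncture_eq_image_restrict_word: "puncture S C = restrict_word S ` C"
  unfolding puncture_def restrict_word_def ..

lemma weight_eq_card_word_support: "weight n c = card (word_support n c)"
  unfolding weight_def word_support_def ..

lemma word_support_subset: "word_support n c \<subseteq> {..<n}"
  unfolding word_support_def by auto

lemma finite_word_support: "finite (word_support n c)"
  by (rule finite_subset[OF word_support_subset]) simp

lemma dual_code_subset_words: "dual_code n C \<subseteq> words n"
  unfolding dual_code_def by blast

lemma eq_0_off_if_weight_lt_2:
  assumes "weight n c < 2" "j < n" "c j \<noteq> 0" "i < n" "i \<noteq> j"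
  shows "c i = 0"
proof (rule ccontr)
  assume "c i \<noteq> 0"
  then have "card {i, j} \<le> weight n c"
    unfolding weight_eq_card_word_support using assms(2-4)
    by (intro card_mono finite_word_support) (auto simp: word_support_def)
  then show False using assms(1,5) by simp
qed

lemma word_support_nonempty:
  assumes "c \<in> words n" "c \<noteq> (\<lambda>_. 0)"
  obtains i where "i < n" "c i \<noteq> 0"
proof -
  obtain i where "c i \<noteq> 0" using assms(2) by (auto simp: fun_eq_iff)
  moreover have "i < n"
  proof (rule ccontr)
    assume "\<not> i < n"
    then have "c i = 0" using assms(1) by (simp add: words_def)
    then show False using \<open>c i \<noteq> 0\<close> by simp
  qed
  ultimately show ?thesis using that by blast
qed

lemma card_supported_on:
  assumes "finite T"
  shows "card (supported_on T :: (nat \<Rightarrow> 'a::{zero,finite}) set) = CARD('a) ^ card T"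
proof -
  have "bij_betw (\<lambda>v. restrict v T) (supported_on T :: (nat \<Rightarrow> 'a) set) (PiE T (\<lambda>_. UNIV))"
  proof (rule bij_betw_imageI)
    show "inj_on (\<lambda>v. restrict v T) (supported_on T :: (nat \<Rightarrow> 'a) set)"
    proof (rule inj_onI)
      fix v w :: "nat \<Rightarrow> 'a"
      assume vw: "v \<in> supported_on T" "w \<in> supported_on T" "restrict v T = restrict w T"
      show "v = w"
      proof
        fix i
        show "v i = w i"
        proof (cases "i \<in> T")
          case True
          then show ?thesis using fun_cong[OF vw(3), of i] by simp
        qed (use vw in \<open>auto simp: supported_on_def\<close>)
      qed
    qed
    have "f \<in> (\<lambda>v. restrict v T) ` supported_on T" if "f \<in> PiE T (\<lambda>_. UNIV)" for f :: "nat \<Rightarrow> 'a"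
      using that by (intro image_eqI[where x = "restrict_word T f"])
        (auto simp: supported_on_def restrict_word_def PiE_def extensional_def)
    then show "(\<lambda>v. restrict v T) ` (supported_on T :: (nat \<Rightarrow> 'a) set) = PiE T (\<lambda>_. UNIV)"
      by auto
  qed
  then show ?thesis using assms by (simp add: bij_betw_same_card card_PiE)
qed

lemma finite_supported_on:
  "finite T \<Longrightarrow> finite (supported_on T :: (nat \<Rightarrow> 'a::{zero,finite}) set)"
  using card_supported_on[of T, where 'a = 'a] by (intro card_ge_0_finite) simp

lemma card_words: "card (words n :: (nat \<Rightarrow> 'a::{zero,finite}) set) = CARD('a) ^ n"
  unfolding words_eq_supported_on by (simp add: card_supported_on)

lemma card_field_ge_2: "CARD('a::{field,finite}) \<ge> 2"
proof -
  have "card {0::'a, 1} \<le> CARD('a)" by (rule card_mono) auto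
  then show ?thesis by simp
qed

lemma code_dim_eqI:
  fixes C :: "(nat \<Rightarrow> 'a::{field,finite}) set"
  assumes "card C = CARD('a) ^ k"
  shows "code_dim C = k"
  unfolding code_dim_def assms
  using card_field_ge_2[where 'a = 'a] power_inject_exp by (intro the_equality) auto

lemma min_dist_le_weight: "c \<in> C \<Longrightarrow> c \<noteq> (\<lambda>_. 0) \<Longrightarrow> min_dist n C \<le> weight n c"
  unfolding min_dist_def by (rule cInf_lower) auto

lemma min_dist_geI:
  "c \<in> C \<Longrightarrow> c \<noteq> (\<lambda>_. 0) \<Longrightarrow> (\<And>c. c \<in> C \<Longrightarrow> c \<noteq> (\<lambda>_. 0) \<Longrightarrow> w \<le> weight n c)
    \<Longrightarrow> w \<le> min_dist n C"
  unfolding min_dist_def by (rule cInf_greatest) auto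

lemma min_dist_attained:
  assumes "c \<in> C" "c \<noteq> (\<lambda>_. 0)"
  obtains c' where "c' \<in> C" "c' \<noteq> (\<lambda>_. 0)" "weight n c' = min_dist n C"
proof -
  have "{weight n c | c. c \<in> C \<and> c \<noteq> (\<lambda>_. 0)} \<noteq> {}" using assms by blast
  from Inf_nat_def1[OF this] show ?thesis using that unfolding min_dist_def by auto
qed

lemma obtain_superset_with_card:
  assumes "S \<subseteq> U" "finite U" "card S \<le> K" "K \<le> card U"
  obtains T where "S \<subseteq> T" "T \<subseteq> U" "card T = K"
proof -
  have "finite S" using assms(1,2) finite_subset by blast
  have "K - card S \<le> card (U - S)" using assms \<open>finite S\<close> by (simp add: card_Diff_subset)
  then obtain T' where T': "T' \<subseteq> U - S" "card T' = K - card S" "finite T'"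
    by (rule obtain_subset_with_card_n)
  have "card (S \<union> T') = K" using T' \<open>finite S\<close> assms(3) by (subst card_Un_disjoint) auto
  then show ?thesis using that T' assms(1) by blast
qed

lemma coeff_word_poly_eq: "c \<in> words n \<Longrightarrow> coeff (word_poly n c) = c"
  by (rule ext) (simp add: coeff_word_poly words_def)

lemma coeff_mult_word_poly_in_words:
  fixes g :: "'a::idom poly"
  assumes "degree g + k = n"
  shows "coeff (g * word_poly k f) \<in> words n"
proof (cases "g = 0 \<or> word_poly k f = 0")
  case False
  then have "g \<noteq> 0" "word_poly k f \<noteq> 0" by auto
  then have "k > 0" unfolding word_poly_def by (cases k) auto
  then have "degree (g * word_poly k f) < n"
    using degree_word_poly_le[of k f] \<open>g \<noteq> 0\<close> \<open>word_poly k f \<noteq> 0\<close> assms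
    by (simp add: degree_mult_eq)
  then show ?thesis unfolding words_def by (auto intro: coeff_eq_0)
qed (auto simp: words_def)

lemma coeff_quotient_in_words:
  fixes g :: "'a::idom poly"
  assumes "g \<noteq> 0" "degree g + k = n" "word_poly n c = g * h"
  shows "coeff h \<in> words k"
proof (cases "h = 0")
  case False
  then have "word_poly n c \<noteq> 0" using assms(1,3) False by simp
  then have "n > 0" unfolding word_poly_def by (cases n) auto
  then have "degree h < k" using degree_word_poly_le[of n c] False assms by (simp add: degree_mult_eq)
  then show ?thesis unfolding words_def by (auto intro: coeff_eq_0)
qed (simp add: words_def)

lemma card_multiples_in_words:
  fixes g :: "'a::{field,finite} poly"
  assumes "g \<noteq> 0" "degree g + k = n"
  shows "card {c \<in> words n. g dvd word_poly n c} = CARD('a) ^ k"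
proof -
  define enc where "enc f = coeff (g * word_poly k f)" for f :: "nat \<Rightarrow> 'a"
  have enc_words: "enc f \<in> words n" for f
    unfolding enc_def using assms(2) by (rule coeff_mult_word_poly_in_words)
  have "inj_on enc (words k)"
  proof (rule inj_onI)
    fix f f' assume f: "f \<in> words k" "f' \<in> words k" "enc f = enc f'"
    then have "g * word_poly k f = g * word_poly k f'" unfolding enc_def by (simp only: coeff_inject)
    then have "word_poly k f = word_poly k f'" using assms(1) by simp
    then have "coeff (word_poly k f) = coeff (word_poly k f')" by (rule arg_cong)
    then show "f = f'" by (simp only: coeff_word_poly_eq[OF f(1)] coeff_word_poly_eq[OF f(2)])
  qed
  moreover have "enc ` words k = {c \<in> words n. g dvd word_poly n c}"
  proof
    have "word_poly n (enc f) = g * word_poly k f" for f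
      by (rule word_poly_eqI[OF enc_words]) (simp add: enc_def)
    then show "enc ` words k \<subseteq> {c \<in> words n. g dvd word_poly n c}"
      using enc_words by auto
    show "{c \<in> words n. g dvd word_poly n c} \<subseteq> enc ` words k"
    proof
      fix c assume "c \<in> {c \<in> words n. g dvd word_poly n c}"
      then have c: "c \<in> words n" "g dvd word_poly n c" by auto
      from c(2) obtain h where h: "word_poly n c = g * h" by (elim dvdE)
      have "coeff h \<in> words k" by (rule coeff_quotient_in_words[OF assms h])
      then have "word_poly k (coeff h) = h" by (rule word_poly_eqI) simp
      then have "enc (coeff h) = coeff (word_poly n c)" unfolding enc_def h by simp
      then have "enc (coeff h) = c" by (simp only: coeff_word_poly_eq[OF c(1)])
      then show "c \<in> enc ` words k" using \<open>coeff h \<in> words k\<close> by blast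
    qed
  qed
  ultimately show ?thesis using card_image card_words[where 'a = 'a] by metis
qed

section \<open>Codewords vanishing on a set of coordinates\<close>

lemma orthogonal_single_support:
  fixes u y :: "nat \<Rightarrow> 'a::idom"
  assumes "j < n" "y j \<noteq> 0" "\<And>i. i < n \<Longrightarrow> i \<noteq> j \<Longrightarrow> u i * y i = 0"
    and "(\<Sum>i<n. u i * y i) = 0"
  shows "u j = 0"
proof -
  have "(\<Sum>i\<in>{..<n} - {j}. u i * y i) = 0"
    by (intro sum.neutral ballI assms(3)) auto
  then have "(\<Sum>i<n. u i * y i) = u j * y j"
    using assms(1) by (subst sum.remove[of _ j]) auto
  then show ?thesis using assms(2,4) by simp
qed

lemma orthogonal_restrict_word:
  assumes "y \<in> dual_code n C" "c \<in> C" "word_support n y \<subseteq> T"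
  shows "(\<Sum>i<n. restrict_word T c i * y i) = 0"
proof -
  have "(\<Sum>i<n. restrict_word T c i * y i) = (\<Sum>i<n. c i * y i)"
    using assms(3) by (intro sum.cong) (auto simp: restrict_word_def word_support_def)
  then show ?thesis using assms(1,2) unfolding dual_code_def by simp
qed

lemma card_le_if_determined_outside:
  fixes W :: "(nat \<Rightarrow> 'a::{zero,finite}) set"
  assumes "finite T" "P \<subseteq> T" "W \<subseteq> supported_on T"
    and determined: "\<And>v w. v \<in> W \<Longrightarrow> w \<in> W \<Longrightarrow> (\<And>i. i \<notin> P \<Longrightarrow> v i = w i) \<Longrightarrow> v = w"
  shows "card W \<le> CARD('a) ^ (card T - card P)"
proof -
  have inj: "inj_on (restrict_word (T - P)) W"
  proof (rule inj_onI)
    fix v w assume vw: "v \<in> W" "w \<in> W" "restrict_word (T - P) v = restrict_word (T - P) w"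
    have supp: "v \<in> supported_on T" "w \<in> supported_on T" using vw(1,2) assms(3) by auto
    have "v i = w i" if "i \<notin> P" for i
    proof (cases "i \<in> T")
      case True
      then show ?thesis using that fun_cong[OF vw(3), of i] by (simp add: restrict_word_def)
    next
      case False
      then show ?thesis using supp by (simp add: supported_on_def)
    qed
    then show "v = w" by (rule determined[OF vw(1,2)])
  qed
  have "card W \<le> card (supported_on (T - P) :: (nat \<Rightarrow> 'a) set)"
    by (rule card_inj_on_le[OF inj image_subsetI[OF restrict_word_in_supported_on]])
      (simp add: finite_supported_on assms(1))
  also have "\<dots> = CARD('a) ^ (card T - card P)"
    using assms(1,2) finite_subset[OF assms(2,1)] by (simp add: card_supported_on card_Diff_subset)
  finally show ?thesis .
qed

lemma card_orthogonal_supported_on_le: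
  fixes y :: "nat \<Rightarrow> 'a::{field,finite}"
  assumes "T \<subseteq> {..<n}" "j \<in> T" "y j \<noteq> 0"
  shows "card {v \<in> supported_on T. (\<Sum>i<n. v i * y i) = 0} \<le> CARD('a) ^ (card T - 1)"
proof -
  let ?W = "{v \<in> supported_on T. (\<Sum>i<n. v i * y i) = 0}"
  have "finite T" by (rule finite_subset[OF assms(1)]) simp
  have "card ?W \<le> CARD('a) ^ (card T - card {j})"
  proof (rule card_le_if_determined_outside[OF \<open>finite T\<close>])
    fix v w assume "v \<in> ?W" "w \<in> ?W" and off: "\<And>i. i \<notin> {j} \<Longrightarrow> v i = w i"
    from \<open>v \<in> ?W\<close> \<open>w \<in> ?W\<close> have "(\<Sum>i<n. (v i - w i) * y i) = 0"
      by (simp add: left_diff_distrib sum_subtractf)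
    moreover have "(v i - w i) * y i = 0" if "i \<noteq> j" for i
      using off[of i] that by simp
    ultimately have "v j - w j = 0"
      using assms by (intro orthogonal_single_support[where u = "\<lambda>i. v i - w i"]) auto
    show "v = w"
    proof
      fix i
      show "v i = w i" using off[of i] \<open>v j - w j = 0\<close> by (cases "i = j") auto
    qed
  qed (use assms(2) in auto)
  then show ?thesis by simp
qed

lemma card_orthogonal2_supported_on_le:
  fixes y z :: "nat \<Rightarrow> 'a::{field,finite}"
  assumes "T \<subseteq> {..<n}" "i0 \<in> T" "j0 \<in> T" "y i0 \<noteq> 0" "z i0 = 0" "z j0 \<noteq> 0"
  shows "card {v \<in> supported_on T. (\<Sum>i<n. v i * y i) = 0 \<and> (\<Sum>i<n. v i * z i) = 0}
    \<le> CARD('a) ^ (card T - 2)"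
proof -
  let ?W = "{v \<in> supported_on T. (\<Sum>i<n. v i * y i) = 0 \<and> (\<Sum>i<n. v i * z i) = 0}"
  have "i0 \<noteq> j0" using assms(5,6) by auto
  have "finite T" by (rule finite_subset[OF assms(1)]) simp
  have "card ?W \<le> CARD('a) ^ (card T - card {i0, j0})"
  proof (rule card_le_if_determined_outside[OF \<open>finite T\<close>])
    fix v w assume "v \<in> ?W" "w \<in> ?W" and off: "\<And>i. i \<notin> {i0, j0} \<Longrightarrow> v i = w i"
    define u where "u i = v i - w i" for i
    have u_y: "(\<Sum>i<n. u i * y i) = 0" and u_z: "(\<Sum>i<n. u i * z i) = 0"
      using \<open>v \<in> ?W\<close> \<open>w \<in> ?W\<close> unfolding u_def by (simp_all add: left_diff_distrib sum_subtractf)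
    have u_off: "u i = 0" if "i \<noteq> i0" "i \<noteq> j0" for i
      using off[of i] that unfolding u_def by simp
    have "u i * z i = 0" if "i \<noteq> j0" for i
      using u_off[of i] that assms(5) by (cases "i = i0") auto
    then have "u j0 = 0"
      using assms u_z by (intro orthogonal_single_support[where u = u and j = j0 and y = z]) auto
    then have "u i * y i = 0" if "i \<noteq> i0" for i
      using u_off[of i] that by (cases "i = j0") auto
    then have "u i0 = 0"
      using assms u_y by (intro orthogonal_single_support[where u = u and j = i0 and y = y]) auto
    show "v = w"
    proof
      fix i
      have "u i = 0" using u_off[of i] \<open>u i0 = 0\<close> \<open>u j0 = 0\<close> by (cases "i = i0"; cases "i = j0") auto
      then show "v i = w i" unfolding u_def by simp
    qed
  qed (use assms(2,3) in auto)
  then show ?thesis using \<open>i0 \<noteq> j0\<close> by (simp add: numeral_2_eq_2)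
qed

lemma exists_codeword_vanishing_on:
  fixes C :: "(nat \<Rightarrow> 'a::ab_group_add) set"
  assumes diff_closed: "\<And>c c'. c \<in> C \<Longrightarrow> c' \<in> C \<Longrightarrow> (\<lambda>i. c i - c' i) \<in> C"
    and "T \<subseteq> {..<n}" "restrict_word T ` C \<subseteq> W" "finite W" "card W < card C"
  obtains c where "c \<in> C" "c \<noteq> (\<lambda>_. 0)" "weight n c \<le> n - card T"
proof -
  have "\<not> inj_on (restrict_word T) C"
  proof
    assume "inj_on (restrict_word T) C"
    then have "card C = card (restrict_word T ` C)" by (simp add: card_image)
    also have "\<dots> \<le> card W" by (rule card_mono[OF assms(4,3)])
    finally show False using assms(5) by simp
  qed
  then obtain c1 c2 where c12: "c1 \<in> C" "c2 \<in> C" "c1 \<noteq> c2" "restrict_word T c1 = restrict_word T c2"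
    unfolding inj_on_def by blast
  define c where "c i = c1 i - c2 i" for i
  have "c \<in> C" using diff_closed c12 unfolding c_def by simp
  moreover have "c \<noteq> (\<lambda>_. 0)" using c12(3) unfolding c_def by (auto simp: fun_eq_iff)
  moreover have "word_support n c \<subseteq> {..<n} - T"
  proof
    fix i assume "i \<in> word_support n c"
    moreover have "c i = 0" if "i \<in> T"
      using that fun_cong[OF c12(4), of i] unfolding c_def restrict_word_def by simp
    ultimately show "i \<in> {..<n} - T" unfolding word_support_def by auto
  qed
  then have "weight n c \<le> card ({..<n} - T)"
    unfolding weight_eq_card_word_support by (intro card_mono) auto
  then have "weight n c \<le> n - card T"
    using assms(2) finite_subset[OF assms(2)] by (simp add: card_Diff_subset)
  ultimately show ?thesis using that by blast
qed

lemma exists_codeword_weight_le_singleton: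
  fixes C :: "(nat \<Rightarrow> 'a::{field,finite}) set"
  assumes diff_closed: "\<And>c c'. c \<in> C \<Longrightarrow> c' \<in> C \<Longrightarrow> (\<lambda>i. c i - c' i) \<in> C"
    and "card C = CARD('a) ^ k" "1 \<le> k" "k \<le> n"
  obtains c where "c \<in> C" "c \<noteq> (\<lambda>_. 0)" "weight n c \<le> n - k + 1"
proof -
  have card: "card (supported_on {..<k - 1} :: (nat \<Rightarrow> 'a) set) < card C"
    using assms(2,3) card_field_ge_2[where 'a = 'a] by (simp add: card_supported_on)
  have sub: "{..<k - 1} \<subseteq> {..<n}" using assms(4) by auto
  have img: "restrict_word {..<k - 1} ` C \<subseteq> supported_on {..<k - 1}"
    using restrict_word_in_supported_on by blast
  obtain c where "c \<in> C" "c \<noteq> (\<lambda>_. 0)" "weight n c \<le> n - card {..<k - 1}"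
    by (rule exists_codeword_vanishing_on[OF diff_closed sub img finite_supported_on[OF finite_lessThan] card])
  then show ?thesis using that assms(3,4) by simp
qed

lemma exists_codeword_weight_le_dual_word:
  fixes C :: "(nat \<Rightarrow> 'a::{field,finite}) set"
  assumes diff_closed: "\<And>c c'. c \<in> C \<Longrightarrow> c' \<in> C \<Longrightarrow> (\<lambda>i. c i - c' i) \<in> C"
    and "card C = CARD('a) ^ k" "k \<le> n"
    and y: "y \<in> dual_code n C" "y \<noteq> (\<lambda>_. 0)" "weight n y \<le> k"
  obtains c where "c \<in> C" "c \<noteq> (\<lambda>_. 0)" "weight n c \<le> n - k"
proof -
  have "y \<in> words n" using y(1) dual_code_subset_words by blast
  then obtain j where j: "j < n" "y j \<noteq> 0" using y(2) by (rule word_support_nonempty)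
  obtain T where T: "word_support n y \<subseteq> T" "T \<subseteq> {..<n}" "card T = k"
    using obtain_superset_with_card[OF word_support_subset, of n y k] assms(3) y(3)
    unfolding weight_eq_card_word_support by auto
  let ?W = "{v \<in> supported_on T. (\<Sum>i<n. v i * y i) = 0}"
  have "finite T" by (rule finite_subset[OF T(2)]) simp
  have "j \<in> T" using T(1) j unfolding word_support_def by blast
  then have "k > 0" using T(3) \<open>finite T\<close> by (auto simp: card_gt_0_iff)
  have "card ?W \<le> CARD('a) ^ (k - 1)"
    using card_orthogonal_supported_on_le[where y = y, OF T(2) \<open>j \<in> T\<close> j(2)] T(3) by simp
  also have "\<dots> < card C"
    unfolding assms(2) using card_field_ge_2[where 'a = 'a] \<open>k > 0\<close>
    by (intro power_strict_increasing) auto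
  finally have card: "card ?W < card C" .
  have img: "restrict_word T ` C \<subseteq> ?W"
    using restrict_word_in_supported_on orthogonal_restrict_word[OF y(1) _ T(1)] by blast
  have fin: "finite ?W" by (rule finite_subset[OF _ finite_supported_on[OF \<open>finite T\<close>]]) auto
  obtain c where "c \<in> C" "c \<noteq> (\<lambda>_. 0)" "weight n c \<le> n - card T"
    by (rule exists_codeword_vanishing_on[OF diff_closed T(2) img fin card])
  then show ?thesis using that T(3) by simp
qed

lemma exists_codeword_weight_le_two_dual_words:
  fixes C :: "(nat \<Rightarrow> 'a::{field,finite}) set"
  assumes diff_closed: "\<And>c c'. c \<in> C \<Longrightarrow> c' \<in> C \<Longrightarrow> (\<lambda>i. c i - c' i) \<in> C"
    and "card C = CARD('a) ^ k" "k + 1 \<le> n"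
    and y: "y \<in> dual_code n C" "y i0 \<noteq> 0"
    and z: "z \<in> dual_code n C" "z i0 = 0" "z j0 \<noteq> 0"
    and small: "card (word_support n y \<union> word_support n z) \<le> k + 1"
  obtains c where "c \<in> C" "c \<noteq> (\<lambda>_. 0)" "weight n c \<le> n - (k + 1)"
proof -
  have in_support: "i \<in> word_support n w" if "w \<in> dual_code n C" "w i \<noteq> 0" for w i
    using that dual_code_subset_words unfolding words_def word_support_def by (auto simp: not_le[symmetric])
  have sub: "word_support n y \<union> word_support n z \<subseteq> {..<n}" using word_support_subset by blast
  obtain T where T: "word_support n y \<union> word_support n z \<subseteq> T" "T \<subseteq> {..<n}" "card T = k + 1"
    using obtain_superset_with_card[OF sub _ small] assms(3) by auto
  have "i0 \<in> T" "j0 \<in> T" using T(1) in_support[OF y] in_support[OF z(1,3)] by auto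
  let ?W = "{v \<in> supported_on T. (\<Sum>i<n. v i * y i) = 0 \<and> (\<Sum>i<n. v i * z i) = 0}"
  have "finite T" by (rule finite_subset[OF T(2)]) simp
  have "i0 \<noteq> j0" using z(2,3) by auto
  then have "card {i0, j0} \<le> card T" using \<open>i0 \<in> T\<close> \<open>j0 \<in> T\<close> \<open>finite T\<close> by (intro card_mono) auto
  then have "k > 0" using \<open>i0 \<noteq> j0\<close> T(3) by simp
  have "card ?W \<le> CARD('a) ^ (k - 1)"
    using card_orthogonal2_supported_on_le[where y = y and z = z, OF T(2) \<open>i0 \<in> T\<close> \<open>j0 \<in> T\<close> y(2) z(2,3)]
      T(3) by simp
  also have "\<dots> < card C"
    unfolding assms(2) using card_field_ge_2[where 'a = 'a] \<open>k > 0\<close>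
    by (intro power_strict_increasing) auto
  finally have card: "card ?W < card C" .
  have img: "restrict_word T ` C \<subseteq> ?W"
    using restrict_word_in_supported_on orthogonal_restrict_word[OF y(1) _] orthogonal_restrict_word[OF z(1) _] T(1)
    by blast
  have fin: "finite ?W" by (rule finite_subset[OF _ finite_supported_on[OF \<open>finite T\<close>]]) auto
  obtain c where "c \<in> C" "c \<noteq> (\<lambda>_. 0)" "weight n c \<le> n - card T"
    by (rule exists_codeword_vanishing_on[OF diff_closed T(2) img fin card])
  then show ?thesis using that T(3) by simp
qed

section \<open>Cyclic shifts and locality\<close>

definition cyclic_shift :: "nat \<Rightarrow> nat \<Rightarrow> (nat \<Rightarrow> 'a::zero) \<Rightarrow> nat \<Rightarrow> 'a" where
  "cyclic_shift n s c = (\<lambda>i. if i < n then c ((i + s) mod n) else 0)"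

definition shift_closed :: "nat \<Rightarrow> (nat \<Rightarrow> 'a::zero) set \<Rightarrow> bool" where
  "shift_closed n C \<longleftrightarrow> (\<forall>c\<in>C. \<forall>s. cyclic_shift n s c \<in> C)"

lemma mod_add_shift_inverse:
  fixes i n s :: nat
  assumes "i < n"
  shows "((i + s) mod n + (n - s mod n)) mod n = i"
proof -
  have "s mod n < n" using assms by simp
  have "i + s + (n - s mod n) = i + (s div n + 1) * n"
    using div_mult_mod_eq[of s n] \<open>s mod n < n\<close> by (simp only: distrib_right mult_1_left)
  then have "(i + s + (n - s mod n)) mod n = i"
    using assms by (simp only: mod_mult_self1 mod_less)
  then show ?thesis by (simp add: mod_add_left_eq)
qed

lemma bij_betw_shift_index: "bij_betw (\<lambda>i. (i + s) mod n) {..<n} {..<n::nat}"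
proof -
  have "inj_on (\<lambda>i. (i + s) mod n) {..<n}"
  proof (rule inj_onI)
    fix i j assume "i \<in> {..<n}" "j \<in> {..<n}" and eq: "(i + s) mod n = (j + s) mod n"
    then have "i = ((i + s) mod n + (n - s mod n)) mod n"
      by (intro mod_add_shift_inverse[symmetric]) simp
    also have "\<dots> = ((j + s) mod n + (n - s mod n)) mod n" by (simp only: eq)
    also have "\<dots> = j" using \<open>j \<in> {..<n}\<close> by (intro mod_add_shift_inverse) simp
    finally show "i = j" .
  qed
  moreover have "(\<lambda>i. (i + s) mod n) ` {..<n} \<subseteq> {..<n}" by auto
  ultimately show ?thesis by (simp add: bij_betw_def endo_inj_surj)
qed

lemma sum_shift_index: "(\<Sum>i<n. f ((i + s) mod n)) = (\<Sum>i<n::nat. f i)"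
  by (rule sum.reindex_bij_betw[OF bij_betw_shift_index])

lemma cyclic_shift_in_words: "cyclic_shift n s c \<in> words n"
  unfolding cyclic_shift_def words_def by simp

lemma cyclic_shift_apply: "i < n \<Longrightarrow> j < n \<Longrightarrow> cyclic_shift n (j + n - i) c i = c j"
  unfolding cyclic_shift_def by simp

lemma cyclic_shift_inverse_apply:
  assumes "i < n"
  shows "cyclic_shift n (n - s mod n) c ((i + s) mod n) = c i"
proof -
  have "(i + s) mod n < n" using assms by simp
  then show ?thesis unfolding cyclic_shift_def using mod_add_shift_inverse[OF assms, of s] by simp
qed

lemma weight_cyclic_shift: "weight n (cyclic_shift n s c) = weight n c"
proof -
  have "word_support n c = (\<lambda>i. (i + s) mod n) ` word_support n (cyclic_shift n s c)"
    using bij_betw_shift_index[of s n]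
    unfolding word_support_def cyclic_shift_def bij_betw_def by auto
  moreover have "inj_on (\<lambda>i. (i + s) mod n) (word_support n (cyclic_shift n s c))"
    using bij_betw_shift_index[of s n] word_support_subset
    unfolding bij_betw_def by (blast intro: inj_on_subset)
  ultimately show ?thesis by (simp add: weight_eq_card_word_support card_image)
qed

lemma is_cyclic_if_shift_closed:
  assumes "shift_closed n C"
  shows "is_cyclic n C"
  unfolding is_cyclic_def
proof
  fix c assume "c \<in> C"
  then have "cyclic_shift n (n - 1) c \<in> C" using assms unfolding shift_closed_def by blast
  moreover have "cyclic_shift n (n - 1) c = (\<lambda>i. if i < n then c ((i + n - 1) mod n) else 0)"
    unfolding cyclic_shift_def by (intro ext) simp
  ultimately show "(\<lambda>i. if i < n then c ((i + n - 1) mod n) else 0) \<in> C" by simp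
qed

lemma shift_closed_dual_code:
  assumes "shift_closed n C"
  shows "shift_closed n (dual_code n C)"
  unfolding shift_closed_def
proof (intro ballI allI)
  fix y s assume y: "y \<in> dual_code n C"
  have "(\<Sum>i<n. c i * cyclic_shift n s y i) = 0" if "c \<in> C" for c
  proof -
    define c' where "c' = cyclic_shift n (n - s mod n) c"
    have "c' \<in> C" unfolding c'_def using assms that by (simp add: shift_closed_def)
    have "(\<Sum>i<n. c i * cyclic_shift n s y i) = (\<Sum>i<n. c' ((i + s) mod n) * y ((i + s) mod n))"
    proof (rule sum.cong)
      fix i assume "i \<in> {..<n}"
      then show "c i * cyclic_shift n s y i = c' ((i + s) mod n) * y ((i + s) mod n)"
        using cyclic_shift_inverse_apply[of i n s c] unfolding c'_def by (simp add: cyclic_shift_def)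
    qed simp
    also have "\<dots> = (\<Sum>i<n. c' i * y i)" by (rule sum_shift_index)
    also have "\<dots> = 0" using y \<open>c' \<in> C\<close> unfolding dual_code_def by simp
    finally show ?thesis .
  qed
  then show "cyclic_shift n s y \<in> dual_code n C"
    unfolding dual_code_def by (simp add: cyclic_shift_in_words)
qed

text \<open>The support of a dual word through coordinate \<open>i\<close> is a repair group for \<open>i\<close>.\<close>
lemma has_locality_dual_word:
  assumes y: "y \<in> dual_code n C" and "i < n" "y i \<noteq> 0"
  shows "has_locality n C (weight n y - 1) 2 i"
proof -
  define S where "S = word_support n y"
  have "i \<in> S" using assms unfolding S_def word_support_def by simp
  then have "card S > 0" using finite_word_support[of n y] unfolding S_def by (auto simp: card_gt_0_iff)
  then have "card S \<le> weight n y - 1 + 2 - 1" unfolding S_def weight_eq_card_word_support by simp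
  moreover have "weight n c' \<ge> 2" if punct: "c' \<in> puncture S C" and nz: "c' \<noteq> (\<lambda>_. 0)" for c'
  proof (rule ccontr)
    assume light: "\<not> weight n c' \<ge> 2"
    obtain c where c: "c \<in> C" "c' = restrict_word S c"
      using punct unfolding puncture_eq_image_restrict_word by blast
    have "c' \<in> words n"
      unfolding c(2) restrict_word_def words_def S_def word_support_def by simp
    then obtain j where j: "j < n" "c' j \<noteq> 0" using nz by (rule word_support_nonempty)
    have off_j: "c' k = 0" if "k < n" "k \<noteq> j" for k
      using light j that by (intro eq_0_off_if_weight_lt_2) auto
    have "j \<in> S" using j unfolding c(2) restrict_word_def by (cases "j \<in> S") auto
    have orth: "(\<Sum>i<n. c' i * y i) = 0"
      using orthogonal_restrict_word[OF y c(1), of S] unfolding c(2) S_def by simp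
    have "c' j = 0"
      using \<open>j \<in> S\<close> off_j unfolding S_def word_support_def
      by (intro orthogonal_single_support[where u = c' and y = y, OF j(1) _ _ orth]) auto
    then show False using j by simp
  qed
  moreover have "S \<subseteq> {..<n}" unfolding S_def by (rule word_support_subset)
  ultimately show ?thesis unfolding has_locality_def using \<open>i \<in> S\<close> by blast
qed

lemma weight_dual_word_ge_2:
  assumes "shift_closed n C" "C \<subseteq> words n" "c \<in> C" "c \<noteq> (\<lambda>_. 0)"
    and y: "y \<in> dual_code n C" "y \<noteq> (\<lambda>_. 0)"
  shows "weight n y \<ge> 2"
proof (rule ccontr)
  assume light: "\<not> weight n y \<ge> 2"
  have "y \<in> words n" using y(1) dual_code_subset_words by blast
  then obtain j where j: "j < n" "y j \<noteq> 0" using y(2) by (rule word_support_nonempty)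
  have off_j: "y k = 0" if "k < n" "k \<noteq> j" for k
    using light j that by (intro eq_0_off_if_weight_lt_2) auto
  have "c' j = 0" if "c' \<in> C" for c'
    using j off_j y(1) that unfolding dual_code_def
    by (intro orthogonal_single_support[where u = c' and y = y, OF j]) auto
  then have "c k = 0" for k
  proof (cases "k < n")
    case True
    have "cyclic_shift n (k + n - j) c \<in> C" using assms(1,3) unfolding shift_closed_def by blast
    then have "cyclic_shift n (k + n - j) c j = 0" by fact
    then show ?thesis using cyclic_shift_apply[OF j(1) True, of c] by simp
  next
    case False
    then show ?thesis using assms(2,3) unfolding words_def by auto
  qed
  then show False using assms(4) by auto
qed

lemma is_LRC_if_shift_closed:
  assumes "shift_closed n C" "C \<subseteq> words n" "c \<in> C" "c \<noteq> (\<lambda>_. 0)"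
    and "y \<in> dual_code n C" "y \<noteq> (\<lambda>_. 0)"
  shows "is_LRC n C (min_dist n (dual_code n C) - 1) 2"
proof -
  let ?e = "min_dist n (dual_code n C)"
  obtain y0 where y0: "y0 \<in> dual_code n C" "y0 \<noteq> (\<lambda>_. 0)" "weight n y0 = ?e"
    using min_dist_attained[OF assms(5,6)] .
  have "?e \<ge> 2" using weight_dual_word_ge_2[OF assms(1-4) y0(1,2)] y0(3) by simp
  have "y0 \<in> words n" using y0(1) dual_code_subset_words by blast
  then obtain j where j: "j < n" "y0 j \<noteq> 0" using y0(2) by (rule word_support_nonempty)
  have "has_locality n C (?e - 1) 2 i" if "i < n" for i
  proof -
    define y where "y = cyclic_shift n (j + n - i) y0"
    have "y \<in> dual_code n C"
      using shift_closed_dual_code[OF assms(1)] y0(1) unfolding y_def shift_closed_def by blast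
    moreover have "y i \<noteq> 0" using cyclic_shift_apply[OF that j(1), of y0] j(2) unfolding y_def by simp
    moreover have "weight n y = ?e" unfolding y_def weight_cyclic_shift y0(3) ..
    ultimately show ?thesis using has_locality_dual_word that by metis
  qed
  then show ?thesis unfolding is_LRC_def using \<open>?e \<ge> 2\<close> by simp
qed

lemma ceiling_divide_eq:
  fixes j k r :: nat
  assumes "r > 0" "(j - 1) * r < k" "k \<le> j * r"
  shows "\<lceil>real k / real r\<rceil> = int j"
proof (rule ceiling_unique)
  have "j \<ge> 1" using assms(2,3) by (cases j) auto
  have "real (j - 1) * real r < real k" using assms(2) by (simp only: of_nat_mult[symmetric] of_nat_less_iff)
  then show "real_of_int (int j) - 1 < real k / real r"
    using assms(1) \<open>j \<ge> 1\<close> by (simp add: pos_less_divide_eq of_nat_diff)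
  have "real k \<le> real j * real r" using assms(3) by (simp only: of_nat_mult[symmetric] of_nat_le_iff)
  then show "real k / real r \<le> real_of_int (int j)"
    using assms(1) by (simp add: pos_divide_le_eq)
qed

section \<open>The code \<open>C\<^sub>A\<close>\<close>

locale gapped_bch_code =
  fixes \<alpha> :: "'a::{field,finite}" and n b m t l :: nat
  assumes alpha_pow_n: "\<alpha> ^ n = 1"
    and alpha_primitive: "\<And>j. 0 < j \<Longrightarrow> j < n \<Longrightarrow> \<alpha> ^ j \<noteq> 1"
    and coprime_b_n: "coprime b n"
    and m_pos: "m \<ge> 1" and m_less_l: "m + 1 \<le> l" and l_less_n: "l + 2 \<le> n"
begin

definition \<gamma> :: 'a where "\<gamma> = \<alpha> ^ b"

definition J :: "nat set" where "J = {..<m} \<union> {l}"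

definition A :: "'a set" where "A = {\<alpha> ^ (t + j * b) | j. j < m} \<union> {\<alpha> ^ (t + l * b)}"

definition C :: "(nat \<Rightarrow> 'a) set" where "C = cyclic_code n A"

definition k :: nat where "k = n - (m + 1)"

definition syndrome :: "(nat \<Rightarrow> 'a) \<Rightarrow> nat \<Rightarrow> 'a" where
  "syndrome c j = (\<Sum>i<n. c i * (\<alpha> ^ t * \<gamma> ^ j) ^ i)"

definition dual_word :: "'a poly \<Rightarrow> nat \<Rightarrow> 'a" where
  "dual_word H = (\<lambda>i. if i < n then \<alpha> ^ (t * i) * poly H (\<gamma> ^ i) else 0)"

lemma n_eq: "n = k + m + 1"
  unfolding k_def using m_less_l l_less_n by simp

lemma k_pos: "k \<ge> 1"
  unfolding k_def using m_less_l l_less_n by simp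

lemma alpha_nonzero: "\<alpha> \<noteq> 0"
  using alpha_pow_n n_eq by (auto simp: power_0_left)

lemma gamma_nonzero: "\<gamma> \<noteq> 0"
  unfolding \<gamma>_def using alpha_nonzero by simp

lemma alpha_pow_eq_1_iff: "\<alpha> ^ i = 1 \<longleftrightarrow> n dvd i"
proof
  have "\<alpha> ^ i = \<alpha> ^ (n * (i div n) + i mod n)" by simp
  also have "\<dots> = (\<alpha> ^ n) ^ (i div n) * \<alpha> ^ (i mod n)" by (simp only: power_add power_mult)
  also have "\<dots> = \<alpha> ^ (i mod n)" using alpha_pow_n by simp
  finally have "\<alpha> ^ i = \<alpha> ^ (i mod n)" .
  moreover assume "\<alpha> ^ i = 1"
  ultimately have "\<alpha> ^ (i mod n) = 1" by simp
  moreover have "i mod n < n" using n_eq by simp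
  ultimately have "\<not> 0 < i mod n" using alpha_primitive by blast
  then show "n dvd i" by (simp add: dvd_eq_mod_eq_0)
next
  assume "n dvd i"
  then obtain q where "i = n * q" by (elim dvdE)
  then show "\<alpha> ^ i = 1" using alpha_pow_n by (simp add: power_mult)
qed

lemma inj_on_gamma_pow: "inj_on (\<lambda>i. \<gamma> ^ i) {..<n}"
proof -
  have ordered: "i = j" if "i \<le> j" "j < n" "\<gamma> ^ i = \<gamma> ^ j" for i j
  proof -
    have "\<gamma> ^ i * \<gamma> ^ (j - i) = \<gamma> ^ j" using that(1) by (simp add: power_add[symmetric])
    then have "\<gamma> ^ j * \<gamma> ^ (j - i) = \<gamma> ^ j * 1" using that(3) by simp
    then have "\<gamma> ^ (j - i) = 1" using gamma_nonzero by simp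
    then have "\<alpha> ^ (b * (j - i)) = 1" unfolding \<gamma>_def by (simp add: power_mult)
    then have "n dvd j - i"
      using coprime_b_n by (simp add: alpha_pow_eq_1_iff coprime_dvd_mult_right_iff coprime_commute)
    then have "j - i = 0" using dvd_imp_le[of n "j - i"] that(2) by (cases "j - i = 0") auto
    then show "i = j" using that(1) by simp
  qed
  show ?thesis
  proof (rule inj_onI)
    fix i j assume "i \<in> {..<n}" "j \<in> {..<n}" "\<gamma> ^ i = \<gamma> ^ j"
    then show "i = j" using ordered[of i j] ordered[of j i] by (cases "i \<le> j") auto
  qed
qed

lemma alpha_pow_exponent: "\<alpha> ^ (t + j * b) = \<alpha> ^ t * \<gamma> ^ j"
  unfolding \<gamma>_def by (simp add: power_add mult.commute[of j b] power_mult)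

lemma A_eq_image: "A = (\<lambda>j. \<alpha> ^ t * \<gamma> ^ j) ` J"
  unfolding A_def J_def image_Un by (auto simp: alpha_pow_exponent)

lemma J_subset: "J \<subseteq> {..<n}"
  unfolding J_def using m_less_l l_less_n by auto

lemma card_A: "card A = m + 1"
proof -
  have "inj_on (\<lambda>j. \<alpha> ^ t * \<gamma> ^ j) J"
    using inj_on_subset[OF inj_on_gamma_pow J_subset] alpha_nonzero by (auto simp: inj_on_def)
  then have "card A = card J" unfolding A_eq_image by (rule card_image)
  also have "\<dots> = m + 1" unfolding J_def using m_less_l by simp
  finally show ?thesis .
qed

lemma finite_A: "finite A"
  unfolding A_eq_image J_def by simp

lemma mem_C_iff: "c \<in> C \<longleftrightarrow> c \<in> words n \<and> (\<forall>j\<in>J. syndrome c j = 0)"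
  unfolding C_def cyclic_code_def gen_poly_dvd_iff[OF finite_A]
  by (simp add: A_eq_image poly_word_poly syndrome_def)

lemma C_subset_words: "C \<subseteq> words n"
  using mem_C_iff by blast

lemma C_diff_closed: "c \<in> C \<Longrightarrow> c' \<in> C \<Longrightarrow> (\<lambda>i. c i - c' i) \<in> C"
  unfolding mem_C_iff syndrome_def words_def by (simp add: left_diff_distrib sum_subtractf)

lemma card_C: "card C = CARD('a) ^ k"
proof -
  have "degree (gen_poly A) + k = n" using degree_gen_poly[OF finite_A] card_A n_eq by linarith
  then show ?thesis
    unfolding C_def cyclic_code_def by (rule card_multiples_in_words[OF gen_poly_nonzero[OF finite_A]])
qed

lemma code_dim_C: "code_dim C = k"
  by (rule code_dim_eqI[OF card_C])

lemma root_pow_n: "(\<alpha> ^ t * \<gamma> ^ j) ^ n = 1"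
proof -
  have "(\<alpha> ^ t * \<gamma> ^ j) ^ n = \<alpha> ^ (n * t) * \<alpha> ^ (n * (b * j))"
    unfolding \<gamma>_def by (simp add: power_mult_distrib power_mult[symmetric] mult_ac)
  moreover have "\<alpha> ^ (n * t) = 1" "\<alpha> ^ (n * (b * j)) = 1" by (simp_all add: alpha_pow_eq_1_iff)
  ultimately show ?thesis by simp
qed

lemma syndrome_cyclic_shift: "syndrome (cyclic_shift n s c) j * (\<alpha> ^ t * \<gamma> ^ j) ^ s = syndrome c j"
proof -
  define \<beta> where "\<beta> = \<alpha> ^ t * \<gamma> ^ j"
  have "\<beta> ^ (i + s) = \<beta> ^ ((i + s) mod n)" for i
    using pow_eq_pow_mod[of \<beta> n] root_pow_n unfolding \<beta>_def by blast
  then have "syndrome (cyclic_shift n s c) j * \<beta> ^ s = (\<Sum>i<n. c ((i + s) mod n) * \<beta> ^ ((i + s) mod n))"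
    unfolding syndrome_def cyclic_shift_def \<beta>_def[symmetric]
    by (simp add: sum_distrib_right mult.assoc power_add)
  also have "\<dots> = syndrome c j" unfolding syndrome_def \<beta>_def by (rule sum_shift_index)
  finally show ?thesis unfolding \<beta>_def .
qed

lemma C_shift_closed: "shift_closed n C"
  unfolding shift_closed_def
proof (intro ballI allI)
  fix c s assume "c \<in> C"
  have "syndrome (cyclic_shift n s c) j = 0" if "j \<in> J" for j
    using syndrome_cyclic_shift[of s c j] \<open>c \<in> C\<close> that alpha_nonzero gamma_nonzero
    unfolding mem_C_iff by simp
  then show "cyclic_shift n s c \<in> C" unfolding mem_C_iff by (simp add: cyclic_shift_in_words)
qed

lemma inner_dual_word: "(\<Sum>i<n. c i * dual_word H i) = (\<Sum>j\<le>degree H. coeff H j * syndrome c j)"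
proof -
  have "dual_word H i = (\<Sum>j\<le>degree H. coeff H j * (\<alpha> ^ t * \<gamma> ^ j) ^ i)" if "i < n" for i
  proof -
    have "(x ^ p) ^ q = (x ^ q) ^ p" for x :: 'a and p q by (simp only: power_mult[symmetric] mult.commute)
    then show ?thesis
      unfolding dual_word_def poly_altdef using that
      by (simp add: sum_distrib_left power_mult_distrib power_mult mult_ac)
  qed
  then have "(\<Sum>i<n. c i * dual_word H i) = (\<Sum>i<n. \<Sum>j\<le>degree H. coeff H j * (c i * (\<alpha> ^ t * \<gamma> ^ j) ^ i))"
    by (simp add: sum_distrib_left mult_ac)
  also have "\<dots> = (\<Sum>j\<le>degree H. coeff H j * syndrome c j)"
    unfolding syndrome_def by (subst sum.swap) (simp add: sum_distrib_left)
  finally show ?thesis .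
qed

lemma inner_dual_word_eq_0:
  assumes "c \<in> C" "{j. coeff H j \<noteq> 0} \<subseteq> J"
  shows "(\<Sum>i<n. c i * dual_word H i) = 0"
  unfolding inner_dual_word using assms unfolding mem_C_iff by (intro sum.neutral) auto

lemma dual_word_in_dual_code: "{j. coeff H j \<noteq> 0} \<subseteq> J \<Longrightarrow> dual_word H \<in> dual_code n C"
  unfolding dual_code_def using inner_dual_word_eq_0 by (simp add: dual_word_def words_def)

lemma degree_le_l:
  assumes "H \<noteq> 0" "{j. coeff H j \<noteq> 0} \<subseteq> J"
  shows "degree H \<le> l"
proof -
  have "degree H \<in> J" using assms leading_coeff_neq_0[of H] by blast
  then show ?thesis using m_less_l unfolding J_def by auto
qed

lemma dual_word_nonzero:
  assumes "H \<noteq> 0" "{j. coeff H j \<noteq> 0} \<subseteq> J"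
  shows "dual_word H \<noteq> (\<lambda>_. 0)"
proof
  assume zero: "dual_word H = (\<lambda>_. 0)"
  have "poly H (\<gamma> ^ i) = 0" if "i < n" for i
  proof -
    have "dual_word H i = 0" using zero by simp
    then show ?thesis using that alpha_nonzero unfolding dual_word_def by simp
  qed
  then have "card ((\<lambda>i. \<gamma> ^ i) ` {..<n}) \<le> card {x. poly H x = 0}"
    by (intro card_mono[OF poly_roots_finite[OF assms(1)]]) auto
  then have "n \<le> card {x. poly H x = 0}" using card_image[OF inj_on_gamma_pow] by simp
  also have "\<dots> \<le> degree H" by (rule card_poly_roots_bound[OF assms(1)])
  also have "\<dots> \<le> l" by (rule degree_le_l[OF assms])
  finally show False using l_less_n by simp
qed

lemma inner_dual_word_monom: "(\<Sum>i<n. c i * dual_word (monom 1 j) i) = syndrome c j"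
  unfolding inner_dual_word degree_monom_eq[OF one_neq_zero] coeff_monom
  by (subst sum.remove[of _ j]) auto

lemma inner_dual_word_add:
  "(\<Sum>i<n. c i * dual_word (p + q) i) = (\<Sum>i<n. c i * dual_word p i) + (\<Sum>i<n. c i * dual_word q i)"
  unfolding dual_word_def by (simp add: algebra_simps sum.distrib)

lemma inner_dual_word_eq_0_if_vanishing:
  assumes "\<And>i. i \<in> word_support n c \<Longrightarrow> poly H (\<gamma> ^ i) = 0"
  shows "(\<Sum>i<n. c i * dual_word H i) = 0"
  using assms unfolding dual_word_def word_support_def by (intro sum.neutral) auto

lemma eq_0_if_low_syndromes_vanish:
  assumes "c \<in> words n" "\<And>j. j < weight n c \<Longrightarrow> syndrome c j = 0"
  shows "c = (\<lambda>_. 0)"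
proof (rule ccontr)
  assume "c \<noteq> (\<lambda>_. 0)"
  then obtain i0 where i0: "i0 < n" "c i0 \<noteq> 0" using assms(1) by (elim word_support_nonempty)
  define P where "P = word_support n c"
  have "i0 \<in> P" using i0 unfolding P_def word_support_def by simp
  moreover have "inj_on (\<lambda>i. \<gamma> ^ i) P"
    unfolding P_def by (rule inj_on_subset[OF inj_on_gamma_pow word_support_subset])
  ultimately obtain H where H: "degree H = card P - 1"
    "\<And>i. i \<in> P \<Longrightarrow> i \<noteq> i0 \<Longrightarrow> poly H (\<gamma> ^ i) = 0" "poly H (\<gamma> ^ i0) \<noteq> 0"
    using exists_poly_vanishing_except[of P i0 "\<lambda>i. \<gamma> ^ i"] finite_word_support unfolding P_def by blast
  have "card P > 0" using finite_word_support \<open>i0 \<in> P\<close> unfolding P_def by (auto simp: card_gt_0_iff)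
  then have "degree H < weight n c" using H(1) unfolding P_def weight_eq_card_word_support by simp
  then have "(\<Sum>i<n. c i * dual_word H i) = 0"
    unfolding inner_dual_word using assms(2) by (intro sum.neutral) auto
  moreover have "c i * dual_word H i = 0" if "i < n" "i \<noteq> i0" for i
    using H(2)[of i] that unfolding P_def word_support_def dual_word_def by auto
  moreover have "dual_word H i0 \<noteq> 0" using H(3) i0(1) alpha_nonzero unfolding dual_word_def by simp
  ultimately have "c i0 = 0"
    by (intro orthogonal_single_support[where u = c and y = "dual_word H", OF i0(1)])
  then show False using i0(2) by simp
qed

lemma bch_bound:
  assumes "c \<in> C" "c \<noteq> (\<lambda>_. 0)"
  shows "weight n c \<ge> m + 1"
proof (rule ccontr)
  assume "\<not> weight n c \<ge> m + 1"
  then have "syndrome c j = 0" if "j < weight n c" for j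
    using assms(1) that unfolding mem_C_iff J_def by auto
  then have "c = (\<lambda>_. 0)" using assms(1) C_subset_words by (intro eq_0_if_low_syndromes_vanish) auto
  then show False using assms(2) by simp
qed

lemma syndrome_eq_0_if_vanishing_poly:
  assumes "c \<in> C" "coeff H m \<noteq> 0" "\<And>j. coeff H j \<noteq> 0 \<Longrightarrow> j < m + 1 \<or> j = l"
    and vanish: "\<And>i. i \<in> word_support n c \<Longrightarrow> poly H (\<gamma> ^ i) = 0"
  shows "syndrome c m = 0"
proof -
  define \<rho> where "\<rho> = coeff H m"
  define G where "G = monom 1 m - smult (1 / \<rho>) H"
  have "{j. coeff G j \<noteq> 0} \<subseteq> J"
  proof
    fix j assume "j \<in> {j. coeff G j \<noteq> 0}"
    then have "coeff G j \<noteq> 0" by simp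
    moreover have "coeff G m = 0" unfolding G_def \<rho>_def using assms(2) by simp
    ultimately have "j \<noteq> m" by auto
    then have "coeff H j \<noteq> 0" using \<open>coeff G j \<noteq> 0\<close> unfolding G_def by (simp add: coeff_monom)
    then show "j \<in> J" using assms(3)[of j] \<open>j \<noteq> m\<close> unfolding J_def by auto
  qed
  then have "(\<Sum>i<n. c i * dual_word G i) = 0" by (rule inner_dual_word_eq_0[OF assms(1)])
  moreover have "(\<Sum>i<n. c i * dual_word (smult (1 / \<rho>) H) i) = 0"
    using vanish by (intro inner_dual_word_eq_0_if_vanishing) simp
  moreover have "monom 1 m = G + smult (1 / \<rho>) H" unfolding G_def by simp
  then have "syndrome c m = (\<Sum>i<n. c i * dual_word (G + smult (1 / \<rho>) H) i)"
    by (simp only: inner_dual_word_monom[symmetric])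
  ultimately show ?thesis by (simp only: inner_dual_word_add add_0)
qed

text \<open>Interpolating \<open>x\<^sup>l\<close> on the support gives a polynomial supported on \<open>{0..m} \<union> {l}\<close>; its
  \<open>x\<^sup>m\<close> coefficient vanishes, as otherwise the \<open>m\<close>-th syndrome would vanish too and the
  codeword would be zero.\<close>
lemma exists_poly_vanishing_on_support:
  assumes c: "c \<in> C" "c \<noteq> (\<lambda>_. 0)" "weight n c = m + 1"
  obtains H where "H \<noteq> 0" "{j. coeff H j \<noteq> 0} \<subseteq> J"
    "\<And>i. i \<in> word_support n c \<Longrightarrow> poly H (\<gamma> ^ i) = 0"
proof -
  let ?X = "(\<lambda>i. \<gamma> ^ i) ` word_support n c"
  have "card ?X = card (word_support n c)"
    by (rule card_image[OF inj_on_subset[OF inj_on_gamma_pow word_support_subset]])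
  then have "card ?X = m + 1" using c(3) by (simp add: weight_eq_card_word_support)
  then obtain H where H: "coeff H l = 1" "\<And>j. coeff H j \<noteq> 0 \<Longrightarrow> j < m + 1 \<or> j = l"
    "\<And>x. x \<in> ?X \<Longrightarrow> poly H x = 0"
    using exists_poly_vanishing_with_gap[of ?X l] m_less_l finite_word_support by auto
  have vanish: "poly H (\<gamma> ^ i) = 0" if "i \<in> word_support n c" for i using H(3) that by blast
  have "coeff H m = 0"
  proof (rule ccontr)
    assume "coeff H m \<noteq> 0"
    then have "syndrome c m = 0"
      using H(2) vanish by (intro syndrome_eq_0_if_vanishing_poly[OF c(1)]) auto
    then have "syndrome c j = 0" if "j < weight n c" for j
      using that c(1,3) unfolding mem_C_iff J_def by (cases "j = m") auto
    then have "c = (\<lambda>_. 0)" using c(1) C_subset_words by (intro eq_0_if_low_syndromes_vanish) auto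
    then show False using c(2) by simp
  qed
  have "{j. coeff H j \<noteq> 0} \<subseteq> J"
  proof
    fix j assume "j \<in> {j. coeff H j \<noteq> 0}"
    then have "j < m + 1 \<or> j = l" "j \<noteq> m" using H(2) \<open>coeff H m = 0\<close> by auto
    then show "j \<in> J" unfolding J_def by auto
  qed
  moreover have "H \<noteq> 0" using H(1) by auto
  ultimately show ?thesis using that vanish by blast
qed

lemma weight_dual_word_le:
  assumes "\<And>i. i \<in> word_support n c \<Longrightarrow> poly H (\<gamma> ^ i) = 0"
  shows "weight n (dual_word H) \<le> n - weight n c"
proof -
  have "word_support n (dual_word H) \<subseteq> {..<n} - word_support n c"
    using assms unfolding word_support_def dual_word_def by auto
  then have "weight n (dual_word H) \<le> card ({..<n} - word_support n c)"
    unfolding weight_eq_card_word_support by (intro card_mono) auto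
  then show ?thesis
    by (simp add: card_Diff_subset[OF finite_word_support word_support_subset] weight_eq_card_word_support)
qed

abbreviation dual_distance :: nat where "dual_distance \<equiv> min_dist n (dual_code n C)"

lemma dual_word_1: "dual_word 1 \<in> dual_code n C" "dual_word 1 \<noteq> (\<lambda>_. 0)"
proof -
  have "{j. coeff (1 :: 'a poly) j \<noteq> 0} \<subseteq> J" using m_pos unfolding J_def by (auto simp: coeff_1)
  then show "dual_word 1 \<in> dual_code n C" "dual_word 1 \<noteq> (\<lambda>_. 0)"
    by (simp_all add: dual_word_in_dual_code dual_word_nonzero)
qed

lemma exists_codeword_weight_le_m2:
  obtains c where "c \<in> C" "c \<noteq> (\<lambda>_. 0)" "weight n c \<le> m + 2"
proof -
  have "k \<le> n" using n_eq by simp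
  obtain c where c: "c \<in> C" "c \<noteq> (\<lambda>_. 0)" "weight n c \<le> n - k + 1"
    by (rule exists_codeword_weight_le_singleton[OF C_diff_closed card_C k_pos \<open>k \<le> n\<close>])
  show ?thesis using that[OF c(1,2)] c(3) n_eq by simp
qed

lemma is_LRC_C: "is_LRC n C (dual_distance - 1) 2"
proof -
  obtain c where "c \<in> C" "c \<noteq> (\<lambda>_. 0)" by (rule exists_codeword_weight_le_m2)
  then show ?thesis by (rule is_LRC_if_shift_closed[OF C_shift_closed C_subset_words _ _ dual_word_1])
qed

lemma min_dist_C_ge: "min_dist n C \<ge> m + 1"
proof -
  obtain c where "c \<in> C" "c \<noteq> (\<lambda>_. 0)" by (rule exists_codeword_weight_le_m2)
  then show ?thesis by (rule min_dist_geI) (rule bch_bound)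
qed

lemma min_dist_C_if_dual_distance_gt: "dual_distance > k \<Longrightarrow> min_dist n C = m + 2"
proof -
  assume large: "dual_distance > k"
  obtain c0 where c0: "c0 \<in> C" "c0 \<noteq> (\<lambda>_. 0)" "weight n c0 \<le> m + 2"
    by (rule exists_codeword_weight_le_m2)
  have "weight n c \<ge> m + 2" if c: "c \<in> C" "c \<noteq> (\<lambda>_. 0)" for c
  proof (rule ccontr)
    assume "\<not> weight n c \<ge> m + 2"
    then have "weight n c = m + 1" using bch_bound[OF c] by simp
    then obtain H where H: "H \<noteq> 0" "{j. coeff H j \<noteq> 0} \<subseteq> J"
      "\<And>i. i \<in> word_support n c \<Longrightarrow> poly H (\<gamma> ^ i) = 0"
      using exists_poly_vanishing_on_support[OF c] by blast
    have "dual_distance \<le> weight n (dual_word H)"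
      using H(1,2) by (intro min_dist_le_weight dual_word_in_dual_code dual_word_nonzero)
    also have "\<dots> \<le> k"
      using weight_dual_word_le[of c H, OF H(3)] \<open>weight n c = m + 1\<close> n_eq by simp
    finally show False using large by simp
  qed
  then have "min_dist n C \<ge> m + 2" by (intro min_dist_geI[OF c0(1,2)])
  moreover have "min_dist n C \<le> m + 2" using min_dist_le_weight[where n = n, OF c0(1,2)] c0(3) by simp
  ultimately show ?thesis by simp
qed

lemma min_dist_C_if_dual_distance_le: "dual_distance \<le> k \<Longrightarrow> min_dist n C = m + 1"
proof -
  assume "dual_distance \<le> k"
  obtain y where y: "y \<in> dual_code n C" "y \<noteq> (\<lambda>_. 0)" "weight n y = dual_distance"
    using min_dist_attained[OF dual_word_1] .
  have "k \<le> n" "weight n y \<le> k" using n_eq y(3) \<open>dual_distance \<le> k\<close> by simp_all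
  obtain c where c: "c \<in> C" "c \<noteq> (\<lambda>_. 0)" "weight n c \<le> n - k"
    by (rule exists_codeword_weight_le_dual_word[OF C_diff_closed card_C \<open>k \<le> n\<close> y(1,2) \<open>weight n y \<le> k\<close>])
  have "min_dist n C \<le> weight n c" by (rule min_dist_le_weight[OF c(1,2)])
  then show ?thesis using min_dist_C_ge c(3) n_eq by simp
qed

text \<open>Otherwise a minimum-weight dual word and a suitable shift of it together cover at most
  \<open>k + 1\<close> coordinates, which forces a codeword below the BCH bound.\<close>
lemma k_le_twice_dual_distance: "dual_distance \<le> k \<Longrightarrow> k \<le> 2 * (dual_distance - 1)"
proof (rule ccontr)
  assume "dual_distance \<le> k" "\<not> k \<le> 2 * (dual_distance - 1)"
  obtain y where y: "y \<in> dual_code n C" "y \<noteq> (\<lambda>_. 0)" "weight n y = dual_distance"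
    using min_dist_attained[OF dual_word_1] .
  have "y \<in> words n" using y(1) dual_code_subset_words by blast
  then obtain j where j: "j < n" "y j \<noteq> 0" using y(2) by (rule word_support_nonempty)
  have "card (word_support n y) < card {..<n}"
    using y(3) \<open>dual_distance \<le> k\<close> n_eq by (simp add: weight_eq_card_word_support)
  have "\<not> {..<n} \<subseteq> word_support n y"
  proof
    assume "{..<n} \<subseteq> word_support n y"
    then have "card {..<n} \<le> card (word_support n y)" by (rule card_mono[OF finite_word_support])
    then show False using \<open>card (word_support n y) < card {..<n}\<close> by simp
  qed
  then obtain i where i: "i < n" "i \<notin> word_support n y" by auto
  define z where "z = cyclic_shift n (j + n - i) y"
  have z: "z \<in> dual_code n C" "z i \<noteq> 0" "weight n z = dual_distance"
    using shift_closed_dual_code[OF C_shift_closed] y(1,3) cyclic_shift_apply[OF i(1) j(1), of y] j(2)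
    unfolding z_def shift_closed_def weight_cyclic_shift by auto
  have "card (word_support n z \<union> word_support n y) \<le> weight n z + weight n y"
    unfolding weight_eq_card_word_support by (rule card_Un_le)
  also have "\<dots> \<le> k + 1" using z(3) y(3) \<open>\<not> k \<le> 2 * (dual_distance - 1)\<close> by simp
  finally have small: "card (word_support n z \<union> word_support n y) \<le> k + 1" .
  have "y i = 0" using i unfolding word_support_def by simp
  have "k + 1 \<le> n" using n_eq by simp
  obtain c where c: "c \<in> C" "c \<noteq> (\<lambda>_. 0)" "weight n c \<le> n - (k + 1)"
    by (rule exists_codeword_weight_le_two_dual_words[OF C_diff_closed card_C \<open>k + 1 \<le> n\<close>
          z(1,2) y(1) \<open>y i = 0\<close> j(2) small])
  then show False using bch_bound[OF c(1,2)] n_eq by simp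
qed

lemma optimal_LRC_C: "optimal_LRC n C (dual_distance - 1) 2"
proof -
  have "dual_distance - 1 \<ge> 1" using is_LRC_C unfolding is_LRC_def by simp
  then have r_pos: "dual_distance - 1 > 0" by simp
  have "int (min_dist n C) = int n - int k - (\<lceil>real k / real (dual_distance - 1)\<rceil> - 1) + 1"
  proof (cases "dual_distance > k")
    case True
    then have "\<lceil>real k / real (dual_distance - 1)\<rceil> = int 1"
      using k_pos r_pos by (intro ceiling_divide_eq) auto
    then show ?thesis using min_dist_C_if_dual_distance_gt[OF True] n_eq by simp
  next
    case False
    then have "\<lceil>real k / real (dual_distance - 1)\<rceil> = int 2"
      using k_le_twice_dual_distance r_pos by (intro ceiling_divide_eq) auto
    then show ?thesis using min_dist_C_if_dual_distance_le False n_eq by simp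
  qed
  then show ?thesis unfolding optimal_LRC_def code_dim_C using is_LRC_C by simp
qed

end

theorem corollary4p6:
  fixes \<alpha> :: "'a::{field,finite}" and n b m t l :: nat
  assumes "n dvd CARD('a) - 1"
    and "\<alpha> ^ n = 1" and "\<forall>j. 0 < j \<and> j < n \<longrightarrow> \<alpha> ^ j \<noteq> 1"
    and "b \<ge> 1" and "m \<ge> 1" and "coprime b n" and "t < n"
    and "m + 1 \<le> l" and "l + 2 \<le> n"
  defines "A \<equiv> {\<alpha> ^ (t + j * b) | j. j < m} \<union> {\<alpha> ^ (t + l * b)}"
  shows "is_cyclic n (cyclic_code n A) \<and>
         optimal_LRC n (cyclic_code n A) (min_dist n (dual_code n (cyclic_code n A)) - 1) 2"
proof -
  have code: "gapped_bch_code \<alpha> n b m l" using assms(2,3,5,6,8,9) by unfold_locales auto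
  have "cyclic_code n A = gapped_bch_code.C \<alpha> n b m t l"
    unfolding A_def gapped_bch_code.C_def[OF code] gapped_bch_code.A_def[OF code] ..
  then show ?thesis
    using is_cyclic_if_shift_closed[OF gapped_bch_code.C_shift_closed[OF code, of t]]
      gapped_bch_code.optimal_LRC_C[OF code, of t] by simp
qed

end
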